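(* For every integer $n>0$, $$A(n)=B(n)=C(n+1)=\tfrac12 D(n+1)=E(n+2)=F(n+1).$$
   Context: The partition functions are defined as follows. - $A(n)$ is the number of partitions of $n$ into distinct parts. - $B(n)$ is the number of partitions of $n$ into odd parts. - $C(n)$ is the number of partitions of $n$ whose largest part is even and whose parts not exceeding half of the largest part are distinct. - $D(n)$ is the number of partitions of $n$ into non-negative parts (part $0$ allowed) in which the smallest part appears exactly twice and no other part is repeated. - $E(n)$ is the number of partitions of $n$ in which all parts are odd and the largest part appears exactly once. - $F(n)$ is the number of partitions of $n$ whose largest part is even and appears exactly once, all other parts being odd. *)

theory Defs
  imports Main "HOL-Library.Multiset"
begin

definition partitions :: "nat \<Rightarrow> nat multiset set" where
  "partitions n = {M. (\<forall>x\<in>#M. 0 < x) \<and> sum_mset M = n}"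

definition A :: "nat \<Rightarrow> nat" where
  "A n = card {M \<in> partitions n. \<forall>x. count M x \<le> 1}"

definition B :: "nat \<Rightarrow> nat" where
  "B n = card {M \<in> partitions n. \<forall>x\<in>#M. odd x}"

definition C :: "nat \<Rightarrow> nat" where
  "C n = card {M \<in> partitions n. M \<noteq> {#} \<and> even (Max (set_mset M)) \<and>
      (\<forall>x. 2 * x \<le> Max (set_mset M) \<longrightarrow> count M x \<le> 1)}"

text \<open>Partitions into non-negative parts (0 allowed).\<close>
definition D :: "nat \<Rightarrow> nat" where
  "D n = card {M :: nat multiset. sum_mset M = n \<and> M \<noteq> {#} \<and>
      count M (Min (set_mset M)) = 2 \<and>
      (\<forall>x. x \<noteq> Min (set_mset M) \<longrightarrow> count M x \<le> 1)}"

definition E :: "nat \<Rightarrow> nat" where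
  "E n = card {M \<in> partitions n. M \<noteq> {#} \<and> (\<forall>x\<in>#M. odd x) \<and>
      count M (Max (set_mset M)) = 1}"

definition F :: "nat \<Rightarrow> nat" where
  "F n = card {M \<in> partitions n. M \<noteq> {#} \<and> even (Max (set_mset M)) \<and>
      count M (Max (set_mset M)) = 1 \<and>
      (\<forall>x\<in>#M. x \<noteq> Max (set_mset M) \<longrightarrow> odd x)}"

end

theory Submission
  imports Defs
begin

text \<open>
  Splitting off the largest part L of a partition counted by B(n), F(n+1) or E(n+2) leaves a
  partition of n+1-2k into odd parts below 2k, where L = 2k-1, 2k or 2k+1 respectively. For C(n+1)
  the largest part is L = 2k and the rest is a partition of n+1-2k into parts at most 2k whose
  parts at most k are distinct. The two kinds of remainder satisfy the same recurrence in k,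
  obtained by removing parts equal to 2k+1; for the second kind, cutting every part 2k+2 into two
  parts k+1 identifies what is left at level k+1 with level k. Hence all four numbers agree, and the
  case k = n of the same comparison is Glaisher's A(n) = B(n).

  For D, let q(s, m) count partitions of m into distinct parts greater than s. Classifying by the
  smallest part, q(0, m) is the sum of q(t, m-t) over t >= 1, and D(N) is the sum of q(s, N-2s)
  over s >= 0. Summing q(s-1, N-s) = q(s, N-s) + q(s, N-2s) (according to whether s is a part)
  over 1 <= s <= N, the left-hand side becomes 2 q(0, N-1) and the right-hand side D(N).
\<close>

lemma mem_le_sum_mset: "x \<in># M \<Longrightarrow> x \<le> sum_mset (M :: nat multiset)"
  using sum_mset.remove[of x M] by simp

lemma size_le_sum_mset: "\<forall>x\<in>#M. 0 < x \<Longrightarrow> size M \<le> sum_mset (M :: nat multiset)"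
  by (induction M) auto

lemma empty_in_partitions_iff [simp]: "{#} \<in> partitions N \<longleftrightarrow> N = 0"
  by (auto simp: partitions_def)

lemma add_mset_in_partitions_iff [simp]:
  "add_mset a X \<in> partitions N \<longleftrightarrow> 0 < a \<and> a \<le> N \<and> X \<in> partitions (N - a)"
  by (auto simp: partitions_def)

lemma part_le_sum_of_partition: "M \<in> partitions N \<Longrightarrow> x \<in># M \<Longrightarrow> x \<le> N"
  using mem_le_sum_mset by (auto simp: partitions_def)

lemma finite_partitions: "finite (partitions N)"
proof (rule finite_subset)
  show "partitions N \<subseteq> (\<Union>m\<le>N. multisets_of_size {1..N} m)"
    using size_le_sum_mset mem_le_sum_mset
    by (fastforce simp: partitions_def multisets_of_size_def Suc_le_eq)
qed auto

lemma sum_mset_filter_neq: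
  "sum_mset (filter_mset (\<lambda>x. x \<noteq> a) M) + count M a * a = sum_mset (M :: nat multiset)"
proof -
  have "M = filter_mset (\<lambda>x. x \<noteq> a) M + filter_mset (\<lambda>x. x = a) M"
    by (metis multiset_partition add.commute)
  then have "sum_mset M = sum_mset (filter_mset (\<lambda>x. x \<noteq> a) M) + sum_mset (filter_mset (\<lambda>x. x = a) M)"
    by (metis sum_mset.union)
  then show ?thesis
    by (simp add: filter_eq_replicate_mset)
qed

lemma counts_add_mset_le_1_iff:
  "(\<forall>x. count (add_mset a M) x \<le> 1) \<longleftrightarrow> a \<notin># M \<and> (\<forall>x. count M x \<le> 1)"
proof
  assume counts: "\<forall>x. count (add_mset a M) x \<le> 1"
  have "count M x \<le> 1" for x
  proof -
    have "count (add_mset a M) x \<le> 1"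
      using counts by blast
    then show ?thesis
      by (simp split: if_splits)
  qed
  with counts[rule_format, of a] show "a \<notin># M \<and> (\<forall>x. count M x \<le> 1)"
    by (simp add: not_in_iff)
qed (simp add: not_in_iff)

lemma card_split_by_part:
  assumes "finite S"
  shows "card S = card {M \<in> S. a \<notin># M} + card {X. add_mset a X \<in> S}"
proof -
  have split: "S = {M \<in> S. a \<notin># M} \<union> add_mset a ` {X. add_mset a X \<in> S}"
    by (auto simp: image_iff) (metis insert_DiffM)
  have "finite (add_mset a ` {X. add_mset a X \<in> S})"
    by (rule finite_subset[OF _ assms]) auto
  then have "card S = card {M \<in> S. a \<notin># M} + card (add_mset a ` {X. add_mset a X \<in> S})"
    by (subst split, intro card_Un_disjoint) (use assms in auto)
  then show ?thesis
    by (simp add: card_image inj_on_def)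
qed

lemma card_UN_image_inj:
  assumes "finite K" "\<And>k. k \<in> K \<Longrightarrow> finite (U k)" "inj_on (\<lambda>(k, X). h k X) (Sigma K U)"
  shows "card (\<Union>k\<in>K. h k ` U k) = (\<Sum>k\<in>K. card (U k))"
proof -
  have "(\<Union>k\<in>K. h k ` U k) = (\<lambda>(k, X). h k X) ` Sigma K U"
    by auto
  then have "card (\<Union>k\<in>K. h k ` U k) = card (Sigma K U)"
    using assms(3) by (simp add: card_image)
  then show ?thesis
    using assms(1,2) by simp
qed

lemma Max_mset_add_mset: "(\<And>x. x \<in># X \<Longrightarrow> x \<le> L) \<Longrightarrow> Max_mset (add_mset L X) = L"
  by (auto intro: Max_eqI)

lemma Min_mset_add_mset_twice:
  "\<forall>x\<in>#X. s < x \<Longrightarrow> Min_mset (add_mset s (add_mset s X)) = (s :: 'a::linorder)"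
  by (auto intro!: Min_eqI)

lemma doubled_Min_msetE:
  fixes M :: "'a::linorder multiset"
  assumes "M \<noteq> {#}" "count M (Min_mset M) = 2" "\<forall>x. x \<noteq> Min_mset M \<longrightarrow> count M x \<le> 1"
  obtains X where "M = add_mset (Min_mset M) (add_mset (Min_mset M) X)"
    "\<forall>x\<in>#X. Min_mset M < x" "\<forall>x. count X x \<le> 1"
proof
  let ?s = "Min_mset M"
  define X where "X = M - {#?s, ?s#}"
  have count_X: "count X x = (if x = ?s then 0 else count M x)" for x
    using assms(2) by (auto simp: X_def)
  show "M = add_mset ?s (add_mset ?s X)"
    using assms(2) by (intro multiset_eqI) (auto simp: count_X)
  show "\<forall>x\<in>#X. ?s < x"
  proof
    fix x assume "x \<in># X"
    then have "x \<noteq> ?s" "x \<in># M"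
      using count_X[of x] by (auto simp flip: count_greater_zero_iff split: if_splits)
    then show "?s < x"
      using assms(1) by (simp add: order.not_eq_order_implies_strict)
  qed
  show "\<forall>x. count X x \<le> 1"
    using assms(3) by (simp add: count_X)
qed

lemma card_by_largest_part:
  fixes S :: "'a::linorder multiset set" and g :: "'k \<Rightarrow> 'a"
  assumes "{#} \<notin> S" "finite K" "inj_on g K" "\<And>k. k \<in> K \<Longrightarrow> finite (U k)"
    and bounded: "\<And>k X x. k \<in> K \<Longrightarrow> X \<in> U k \<Longrightarrow> x \<in># X \<Longrightarrow> x \<le> g k"
    and split: "\<And>L X. (\<And>x. x \<in># X \<Longrightarrow> x \<le> L) \<Longrightarrow>
      add_mset L X \<in> S \<longleftrightarrow> (\<exists>k\<in>K. L = g k \<and> X \<in> U k)"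
  shows "card S = (\<Sum>k\<in>K. card (U k))"
proof -
  have "S = (\<Union>k\<in>K. add_mset (g k) ` U k)"
  proof (intro equalityI subsetI)
    fix M assume "M \<in> S"
    with assms(1) have "M \<noteq> {#}"
      by auto
    define X where "X = M - {#Max_mset M#}"
    have M: "M = add_mset (Max_mset M) X"
      using \<open>M \<noteq> {#}\<close> by (simp add: X_def)
    have "x \<le> Max_mset M" if "x \<in># X" for x
      using that by (auto simp: X_def dest: in_diffD)
    with split[of X] \<open>M \<in> S\<close> M obtain k where "k \<in> K" "Max_mset M = g k" "X \<in> U k"
      by metis
    with M show "M \<in> (\<Union>k\<in>K. add_mset (g k) ` U k)"
      by auto
  next
    fix M assume "M \<in> (\<Union>k\<in>K. add_mset (g k) ` U k)"
    then show "M \<in> S"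
      using split bounded by auto
  qed
  moreover have "inj_on (\<lambda>(k, X). add_mset (g k) X) (Sigma K U)"
  proof (rule inj_onI, clarsimp)
    fix i j X Y
    assume "i \<in> K" "X \<in> U i" "j \<in> K" "Y \<in> U j" and eq: "add_mset (g i) X = add_mset (g j) Y"
    then have "g i = g j"
      using Max_mset_add_mset[of X "g i"] Max_mset_add_mset[of Y "g j"] bounded by metis
    with \<open>i \<in> K\<close> \<open>j \<in> K\<close> assms(3) eq show "i = j \<and> X = Y"
      by (auto dest: inj_onD)
  qed
  ultimately show ?thesis
    using assms(2,4) by (simp add: card_UN_image_inj)
qed

section \<open>Glaisher's bijection, one part size at a time\<close>

definition odd_partitions_below :: "nat \<Rightarrow> nat \<Rightarrow> nat multiset set" where
  "odd_partitions_below k N = {M \<in> partitions N. \<forall>x\<in>#M. odd x \<and> x < 2 * k}"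

definition half_distinct_partitions :: "nat \<Rightarrow> nat \<Rightarrow> nat multiset set" where
  "half_distinct_partitions k N =
     {M \<in> partitions N. (\<forall>x\<in>#M. x \<le> 2 * k) \<and> (\<forall>x\<le>k. count M x \<le> 1)}"

lemma finite_odd_partitions_below: "finite (odd_partitions_below k N)"
  using finite_partitions by (simp add: odd_partitions_below_def)

lemma finite_half_distinct_partitions: "finite (half_distinct_partitions k N)"
  using finite_partitions by (simp add: half_distinct_partitions_def)

lemma card_odd_partitions_below_Suc:
  "card (odd_partitions_below (Suc k) N) = card (odd_partitions_below k N) +
     (if 2 * k + 1 \<le> N then card (odd_partitions_below (Suc k) (N - (2 * k + 1))) else 0)"
proof -
  have "odd x \<and> x < 2 * Suc k \<and> x \<noteq> 2 * k + 1 \<longleftrightarrow> odd x \<and> x < 2 * k" for x :: nat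
    by presburger
  then have "{M \<in> odd_partitions_below (Suc k) N. 2 * k + 1 \<notin># M} = odd_partitions_below k N"
    by (auto simp: odd_partitions_below_def)
  moreover have "{X. add_mset (2 * k + 1) X \<in> odd_partitions_below (Suc k) N} =
      (if 2 * k + 1 \<le> N then odd_partitions_below (Suc k) (N - (2 * k + 1)) else {})"
    by (auto simp: odd_partitions_below_def)
  ultimately show ?thesis
    using card_split_by_part[OF finite_odd_partitions_below, of "Suc k" N "2 * k + 1"] by simp
qed

lemma odd_partitions_below_1: "odd_partitions_below 1 N = {replicate_mset N 1}"
proof (intro equalityI subsetI)
  fix M assume M: "M \<in> odd_partitions_below 1 N"
  moreover have "odd x \<and> x < 2 \<longleftrightarrow> x = 1" for x :: nat
    by presburger
  ultimately have "set_mset M \<subseteq> {1}"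
    by (auto simp: odd_partitions_below_def)
  then obtain t where "M = replicate_mset t 1"
    by (blast dest: set_mset_subset_singletonD)
  with M show "M \<in> {replicate_mset N 1}"
    by (simp add: odd_partitions_below_def partitions_def)
qed (auto simp: odd_partitions_below_def partitions_def)

lemma half_distinct_partitions_1:
  "half_distinct_partitions 1 N = {replicate_mset (N mod 2) 1 + replicate_mset (N div 2) 2}"
proof (intro equalityI subsetI)
  fix M assume M: "M \<in> half_distinct_partitions 1 N"
  have "set_mset (filter_mset (\<lambda>x. x \<noteq> 1) M) \<subseteq> {2}"
    using M by (force simp: half_distinct_partitions_def partitions_def le_Suc_eq)
  then obtain t where "filter_mset (\<lambda>x. x \<noteq> 1) M = replicate_mset t 2"
    by (blast dest: set_mset_subset_singletonD)
  then have decomp: "M = replicate_mset (count M 1) 1 + replicate_mset t 2"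
    by (metis filter_eq_replicate_mset multiset_partition)
  have "count M 1 \<le> 1"
    using M by (simp add: half_distinct_partitions_def)
  moreover have "N = count M 1 + 2 * t"
    using M by (subst (asm) decomp) (simp add: half_distinct_partitions_def partitions_def)
  ultimately have "count M 1 = N mod 2" "t = N div 2"
    by auto
  then show "M \<in> {replicate_mset (N mod 2) 1 + replicate_mset (N div 2) 2}"
    using decomp by simp
next
  fix M assume "M \<in> {replicate_mset (N mod 2) 1 + replicate_mset (N div 2) (2::nat)}"
  then show "M \<in> half_distinct_partitions 1 N"
    by (simp add: half_distinct_partitions_def partitions_def)
qed

definition split_doubles :: "nat \<Rightarrow> nat multiset \<Rightarrow> nat multiset" where
  "split_doubles a M = filter_mset (\<lambda>x. x \<noteq> 2 * a) M + replicate_mset (2 * count M (2 * a)) a"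

definition merge_pairs :: "nat \<Rightarrow> nat multiset \<Rightarrow> nat multiset" where
  "merge_pairs a M = filter_mset (\<lambda>x. x \<noteq> a) M
     + replicate_mset (count M a mod 2) a + replicate_mset (count M a div 2) (2 * a)"

lemma count_split_doubles:
  "0 < a \<Longrightarrow> count (split_doubles a M) x =
     (if x = a then count M a + 2 * count M (2 * a) else if x = 2 * a then 0 else count M x)"
  by (simp add: split_doubles_def)

lemma count_merge_pairs:
  "0 < a \<Longrightarrow> count (merge_pairs a M) x =
     (if x = a then count M a mod 2 else if x = 2 * a then count M (2 * a) + count M a div 2
      else count M x)"
  by (simp add: merge_pairs_def)

lemma sum_mset_split_doubles: "sum_mset (split_doubles a M) = sum_mset M"
  using sum_mset_filter_neq[of "2 * a" M] by (simp add: split_doubles_def)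

lemma sum_mset_merge_pairs: "sum_mset (merge_pairs a M) = sum_mset M"
proof -
  have "count M a mod 2 * a + count M a div 2 * (2 * a) = (count M a mod 2 + 2 * (count M a div 2)) * a"
    by (simp only: distrib_right mult.assoc mult.commute[of 2])
  then have "count M a mod 2 * a + count M a div 2 * (2 * a) = count M a * a"
    by simp
  with sum_mset_filter_neq[of a M] show ?thesis
    by (simp add: merge_pairs_def add.assoc)
qed

lemma merge_pairs_split_doubles:
  "0 < a \<Longrightarrow> count M a \<le> 1 \<Longrightarrow> merge_pairs a (split_doubles a M) = M"
  by (rule multiset_eqI) (simp add: count_merge_pairs count_split_doubles)

lemma split_doubles_merge_pairs:
  "0 < a \<Longrightarrow> 2 * a \<notin># M \<Longrightarrow> split_doubles a (merge_pairs a M) = M"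
  by (rule multiset_eqI) (simp add: count_merge_pairs count_split_doubles not_in_iff)

(* For k = 0 the excluded part 2k+1 would coincide with the part k+1 created by split_doubles. *)
lemma card_half_distinct_partitions_without_part:
  assumes "1 \<le> k"
  shows "card {M \<in> half_distinct_partitions (Suc k) N. 2 * k + 1 \<notin># M} =
    card (half_distinct_partitions k N)"
proof -
  let ?S = "{M \<in> half_distinct_partitions (Suc k) N. 2 * k + 1 \<notin># M}"
  let ?T = "half_distinct_partitions k N"
  have S: "M \<in> ?S \<longleftrightarrow> sum_mset M = N \<and>
      (\<forall>x. 0 < count M x \<longrightarrow> 0 < x \<and> x \<le> 2 * k + 2 \<and> x \<noteq> 2 * k + 1) \<and>
      (\<forall>x\<le>Suc k. count M x \<le> 1)" for M
    by (auto simp: half_distinct_partitions_def partitions_def)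
  have T: "M \<in> ?T \<longleftrightarrow> sum_mset M = N \<and> (\<forall>x. 0 < count M x \<longrightarrow> 0 < x \<and> x \<le> 2 * k) \<and>
      (\<forall>x\<le>k. count M x \<le> 1)" for M
    by (auto simp: half_distinct_partitions_def partitions_def)
  have "bij_betw (split_doubles (Suc k)) ?S ?T"
  proof (rule bij_betw_byWitness[where f' = "merge_pairs (Suc k)"])
    show "\<forall>M\<in>?S. merge_pairs (Suc k) (split_doubles (Suc k) M) = M"
      using S by (simp add: merge_pairs_split_doubles)
    have "2 * Suc k \<notin># M" if "M \<in> ?T" for M
      using that by (auto simp: half_distinct_partitions_def)
    then show "\<forall>M\<in>?T. split_doubles (Suc k) (merge_pairs (Suc k) M) = M"
      by (simp add: split_doubles_merge_pairs)
    show "split_doubles (Suc k) ` ?S \<subseteq> ?T"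
    proof (rule image_subsetI)
      fix M assume "M \<in> ?S"
      then show "split_doubles (Suc k) M \<in> ?T"
        using assms unfolding S T by (auto simp: count_split_doubles sum_mset_split_doubles)
    qed
    show "merge_pairs (Suc k) ` ?T \<subseteq> ?S"
    proof (rule image_subsetI)
      fix M assume "M \<in> ?T"
      then show "merge_pairs (Suc k) M \<in> ?S"
        using assms unfolding S T by (auto simp: count_merge_pairs sum_mset_merge_pairs)
    qed
  qed
  then show ?thesis
    by (rule bij_betw_same_card)
qed

lemma card_half_distinct_partitions_Suc:
  assumes "1 \<le> k"
  shows "card (half_distinct_partitions (Suc k) N) = card (half_distinct_partitions k N) +
     (if 2 * k + 1 \<le> N then card (half_distinct_partitions (Suc k) (N - (2 * k + 1))) else 0)"
proof -
  have "{X. add_mset (2 * k + 1) X \<in> half_distinct_partitions (Suc k) N} =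
      (if 2 * k + 1 \<le> N then half_distinct_partitions (Suc k) (N - (2 * k + 1)) else {})"
    using assms by (auto simp: half_distinct_partitions_def)
  then show ?thesis
    using card_split_by_part[OF finite_half_distinct_partitions, of "Suc k" N "2 * k + 1"]
      card_half_distinct_partitions_without_part[OF assms] by simp
qed

lemma card_half_distinct_eq_odd_partitions_below:
  assumes "1 \<le> k"
  shows "card (half_distinct_partitions k N) = card (odd_partitions_below k N)"
  using assms
proof (induction k arbitrary: N rule: nat_induct_at_least)
  case base
  show ?case
    using half_distinct_partitions_1[of N] odd_partitions_below_1[of N] by simp
next
  case (Suc k)
  show ?case
  proof (induction N rule: less_induct)
    case (less N)
    then show ?case
      using card_half_distinct_partitions_Suc[OF Suc.hyps, of N] card_odd_partitions_below_Suc[of k N]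
        Suc.IH[of N] by simp
  qed
qed

lemma A_eq_card_half_distinct_partitions: "A n = card (half_distinct_partitions n n)"
proof -
  have "(\<forall>x. count M x \<le> 1) \<longleftrightarrow> (\<forall>x\<in>#M. x \<le> 2 * n) \<and> (\<forall>x\<le>n. count M x \<le> 1)"
    if "M \<in> partitions n" for M
    using part_le_sum_of_partition[OF that] by (metis count_inI le_trans mult_2 le_add1 not_le zero_le)
  then show ?thesis
    unfolding A_def half_distinct_partitions_def by (metis (no_types, lifting) Collect_cong)
qed

lemma B_eq_card_odd_partitions_below:
  assumes "0 < n"
  shows "B n = card (odd_partitions_below n n)"
proof -
  have "x < 2 * n" if "M \<in> partitions n" "x \<in># M" for M x
    using part_le_sum_of_partition[OF that] assms by simp
  then show ?thesis
    unfolding B_def odd_partitions_below_def by (metis (no_types, lifting) Collect_cong)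
qed

section \<open>Removing the largest part\<close>

lemma B_by_largest_part:
  assumes "0 < n"
  shows "B n = (\<Sum>k\<in>{1..(n + 1) div 2}. card (odd_partitions_below k (n + 1 - 2 * k)))"
  unfolding B_def
proof (rule card_by_largest_part)
  show "{#} \<notin> {M \<in> partitions n. \<forall>x\<in>#M. odd x}"
    using assms by simp
  show "inj_on (\<lambda>k. 2 * k - 1) {1..(n + 1) div 2}"
    by (rule inj_onI) simp
  show "x \<le> 2 * k - 1" if "X \<in> odd_partitions_below k (n + 1 - 2 * k)" "x \<in># X" for k X x
    using that unfolding odd_partitions_below_def by fastforce
next
  fix L :: nat and X :: "nat multiset"
  assume le: "\<And>x. x \<in># X \<Longrightarrow> x \<le> L"
  show "add_mset L X \<in> {M \<in> partitions n. \<forall>x\<in>#M. odd x} \<longleftrightarrow>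
    (\<exists>k\<in>{1..(n + 1) div 2}. L = 2 * k - 1 \<and> X \<in> odd_partitions_below k (n + 1 - 2 * k))"
    (is "?member \<longleftrightarrow> ?remainder")
  proof
    assume ?member
    then have L: "L \<le> n" "odd L" and X: "X \<in> partitions (n - L)" "\<forall>x\<in>#X. odd x"
      by auto
    from \<open>odd L\<close> obtain b where "L = 2 * b + 1"
      by (rule oddE)
    with L X le show ?remainder
      by (intro bexI[of _ "Suc b"]) (auto simp: odd_partitions_below_def less_Suc_eq_le)
  next
    assume ?remainder
    then obtain k where "1 \<le> k" "2 * k \<le> n + 1" "L = 2 * k - 1" "X \<in> odd_partitions_below k (n + 1 - 2 * k)"
      by auto
    then show ?member
      by (auto simp: odd_partitions_below_def)
  qed
qed (simp_all add: finite_odd_partitions_below)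

lemma C_by_largest_part:
  "C (n + 1) = (\<Sum>k\<in>{1..(n + 1) div 2}. card (half_distinct_partitions k (n + 1 - 2 * k)))"
  unfolding C_def
proof (rule card_by_largest_part)
  show "inj_on (\<lambda>k. 2 * k) {1..(n + 1) div 2}"
    by (rule inj_onI) simp
  show "x \<le> 2 * k" if "X \<in> half_distinct_partitions k (n + 1 - 2 * k)" "x \<in># X" for k X x
    using that unfolding half_distinct_partitions_def by fastforce
next
  fix L :: nat and X :: "nat multiset"
  assume le: "\<And>x. x \<in># X \<Longrightarrow> x \<le> L"
  have Max: "Max (insert L (set_mset X)) = L"
    using Max_mset_add_mset[OF le] by simp
  show "add_mset L X \<in> {M \<in> partitions (n + 1). M \<noteq> {#} \<and> even (Max_mset M) \<and>
      (\<forall>x. 2 * x \<le> Max_mset M \<longrightarrow> count M x \<le> 1)} \<longleftrightarrow>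
    (\<exists>k\<in>{1..(n + 1) div 2}. L = 2 * k \<and> X \<in> half_distinct_partitions k (n + 1 - 2 * k))"
    (is "?member \<longleftrightarrow> ?remainder")
  proof
    assume ?member
    then have L: "0 < L" "L \<le> n + 1" "even L" and X: "X \<in> partitions (n + 1 - L)"
      "\<forall>x. 2 * x \<le> L \<longrightarrow> count (add_mset L X) x \<le> 1"
      by (auto simp: Max)
    from \<open>even L\<close> obtain k where k: "L = 2 * k"
      by (rule evenE)
    have "count X x \<le> 1" if "x \<le> k" for x
    proof -
      have "count (add_mset L X) x \<le> 1"
        using X(2) that k by simp
      then show ?thesis
        by (simp split: if_splits)
    qed
    with L X le k show ?remainder
      by (intro bexI[of _ k]) (auto simp: half_distinct_partitions_def less_eq_div_iff_mult_less_eq)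
  next
    assume ?remainder
    then obtain k where "1 \<le> k" "k \<le> (n + 1) div 2" "L = 2 * k"
      and X: "X \<in> partitions (n + 1 - L)" "\<forall>x\<le>k. count X x \<le> 1"
      by (auto simp: half_distinct_partitions_def)
    then have "0 < L" "L \<le> n + 1" "even L" "\<forall>x. 2 * x \<le> L \<longrightarrow> count (add_mset L X) x \<le> 1"
      by auto
    with X show ?member
      by (simp add: Max)
  qed
qed (simp_all add: finite_half_distinct_partitions)

lemma E_by_largest_part:
  "E (n + 2) = (\<Sum>k\<in>{1..(n + 1) div 2}. card (odd_partitions_below k (n + 1 - 2 * k)))"
  unfolding E_def
proof (rule card_by_largest_part)
  show "inj_on (\<lambda>k. 2 * k + 1) {1..(n + 1) div 2}"
    by (rule inj_onI) simp
  show "x \<le> 2 * k + 1" if "X \<in> odd_partitions_below k (n + 1 - 2 * k)" "x \<in># X" for k X x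
    using that unfolding odd_partitions_below_def by fastforce
next
  fix L :: nat and X :: "nat multiset"
  assume le: "\<And>x. x \<in># X \<Longrightarrow> x \<le> L"
  have Max: "Max (insert L (set_mset X)) = L"
    using Max_mset_add_mset[OF le] by simp
  show "add_mset L X \<in> {M \<in> partitions (n + 2). M \<noteq> {#} \<and> (\<forall>x\<in>#M. odd x) \<and>
      count M (Max_mset M) = 1} \<longleftrightarrow>
    (\<exists>k\<in>{1..(n + 1) div 2}. L = 2 * k + 1 \<and> X \<in> odd_partitions_below k (n + 1 - 2 * k))"
    (is "?member \<longleftrightarrow> ?remainder")
  proof
    assume ?member
    then have L: "L \<le> n + 2" "odd L" and X: "X \<in> partitions (n + 2 - L)" "L \<notin># X" "\<forall>x\<in>#X. odd x"
      by (auto simp: Max not_in_iff)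
    from \<open>odd L\<close> obtain k where k: "L = 2 * k + 1"
      by (rule oddE)
    have below: "\<forall>x\<in>#X. x < 2 * k"
    proof
      fix x assume "x \<in># X"
      with le X(2,3) k have "x \<le> 2 * k + 1" "x \<noteq> 2 * k + 1" "odd x"
        by auto
      then show "x < 2 * k"
        by presburger
    qed
    with X(1) k have "1 \<le> k"
      by (cases "k = 0") auto
    with L X k below show ?remainder
      by (intro bexI[of _ k]) (auto simp: odd_partitions_below_def)
  next
    assume ?remainder
    then obtain k where k: "2 * k \<le> n + 1" "L = 2 * k + 1"
      and X: "X \<in> odd_partitions_below k (n + 1 - 2 * k)"
      by (auto simp: less_eq_div_iff_mult_less_eq)
    then have parts: "odd x \<and> x < L" if "x \<in># X" for x
      using that unfolding odd_partitions_below_def by fastforce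
    have "0 < L" "L \<le> n + 2" "odd L" "X \<in> partitions (n + 2 - L)"
      using k X by (auto simp: odd_partitions_below_def)
    moreover have "L \<notin># X"
      using parts by blast
    ultimately show ?member
      using parts by (simp add: Max not_in_iff)
  qed
qed (simp_all add: finite_odd_partitions_below)

lemma F_by_largest_part:
  "F (n + 1) = (\<Sum>k\<in>{1..(n + 1) div 2}. card (odd_partitions_below k (n + 1 - 2 * k)))"
  unfolding F_def
proof (rule card_by_largest_part)
  show "inj_on (\<lambda>k. 2 * k) {1..(n + 1) div 2}"
    by (rule inj_onI) simp
  show "x \<le> 2 * k" if "X \<in> odd_partitions_below k (n + 1 - 2 * k)" "x \<in># X" for k X x
    using that unfolding odd_partitions_below_def by fastforce
next
  fix L :: nat and X :: "nat multiset"
  assume le: "\<And>x. x \<in># X \<Longrightarrow> x \<le> L"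
  have Max: "Max (insert L (set_mset X)) = L"
    using Max_mset_add_mset[OF le] by simp
  show "add_mset L X \<in> {M \<in> partitions (n + 1). M \<noteq> {#} \<and> even (Max_mset M) \<and>
      count M (Max_mset M) = 1 \<and> (\<forall>x\<in>#M. x \<noteq> Max_mset M \<longrightarrow> odd x)} \<longleftrightarrow>
    (\<exists>k\<in>{1..(n + 1) div 2}. L = 2 * k \<and> X \<in> odd_partitions_below k (n + 1 - 2 * k))"
    (is "?member \<longleftrightarrow> ?remainder")
  proof
    assume ?member
    then have L: "0 < L" "L \<le> n + 1" "even L" and X: "X \<in> partitions (n + 1 - L)"
      "L \<notin># X" "\<forall>x\<in>#X. x \<noteq> L \<longrightarrow> odd x"
      by (auto simp: Max not_in_iff)
    have "x < L" if "x \<in># X" for x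
      using le[OF that] that X(2) by (cases "x = L") auto
    with L X show ?remainder
      by (intro bexI[of _ "L div 2"]) (auto simp: odd_partitions_below_def)
  next
    assume ?remainder
    then obtain k where "1 \<le> k" "k \<le> (n + 1) div 2" "L = 2 * k"
      and X: "X \<in> partitions (n + 1 - L)" "\<forall>x\<in>#X. odd x \<and> x < L"
      by (auto simp: odd_partitions_below_def)
    then have "0 < L" "L \<le> n + 1" "even L" "count X L = 0"
      by (auto simp: count_eq_zero_iff)
    with X show ?member
      by (simp add: Max)
  qed
qed (simp_all add: finite_odd_partitions_below)

section \<open>Distinct parts above a bound\<close>

definition distinct_parts_above :: "nat \<Rightarrow> nat \<Rightarrow> nat multiset set" where
  "distinct_parts_above s N = {M \<in> partitions N. (\<forall>x\<in>#M. s < x) \<and> (\<forall>x. count M x \<le> 1)}"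

lemma finite_distinct_parts_above: "finite (distinct_parts_above s N)"
  using finite_partitions by (simp add: distinct_parts_above_def)

lemma A_eq_card_distinct_parts_above: "A n = card (distinct_parts_above 0 n)"
  unfolding A_def distinct_parts_above_def partitions_def by (rule arg_cong[where f = card]) auto

lemma card_distinct_parts_above_Suc:
  "card (distinct_parts_above s N) = card (distinct_parts_above (Suc s) N) +
     (if Suc s \<le> N then card (distinct_parts_above (Suc s) (N - Suc s)) else 0)"
proof -
  have above: "s < x \<and> x \<noteq> Suc s \<longleftrightarrow> Suc s < x" for x
    by arith
  then have "{M \<in> distinct_parts_above s N. Suc s \<notin># M} = distinct_parts_above (Suc s) N"
    by (auto simp: distinct_parts_above_def)
  moreover have "add_mset (Suc s) X \<in> distinct_parts_above s N \<longleftrightarrow>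
      Suc s \<le> N \<and> X \<in> distinct_parts_above (Suc s) (N - Suc s)" for X
  proof
    assume "add_mset (Suc s) X \<in> distinct_parts_above s N"
    then have X: "Suc s \<le> N" "X \<in> partitions (N - Suc s)" "\<forall>x\<in>#X. s < x" "Suc s \<notin># X"
      "\<forall>x. count X x \<le> 1"
      unfolding distinct_parts_above_def mem_Collect_eq counts_add_mset_le_1_iff by simp_all
    then have "\<forall>x\<in>#X. Suc s < x"
      using above by metis
    with X show "Suc s \<le> N \<and> X \<in> distinct_parts_above (Suc s) (N - Suc s)"
      by (simp add: distinct_parts_above_def)
  next
    assume "Suc s \<le> N \<and> X \<in> distinct_parts_above (Suc s) (N - Suc s)"
    then show "add_mset (Suc s) X \<in> distinct_parts_above s N"
      unfolding distinct_parts_above_def mem_Collect_eq counts_add_mset_le_1_iff by auto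
  qed
  then have "{X. add_mset (Suc s) X \<in> distinct_parts_above s N} =
      (if Suc s \<le> N then distinct_parts_above (Suc s) (N - Suc s) else {})"
    by auto
  ultimately show ?thesis
    using card_split_by_part[OF finite_distinct_parts_above, of s N "Suc s"] by simp
qed

lemma distinct_parts_above_self: "0 < N \<Longrightarrow> distinct_parts_above N N = {}"
proof (rule equals0I)
  fix M assume "0 < N" "M \<in> distinct_parts_above N N"
  then have "M \<in> partitions N" "M \<noteq> {#}" "\<forall>x\<in>#M. N < x"
    by (auto simp: distinct_parts_above_def)
  then show False
    using part_le_sum_of_partition by (metis multiset_nonemptyE not_le)
qed

lemma card_distinct_parts_above_0_by_smallest_le:
  "card (distinct_parts_above 0 N) = card (distinct_parts_above t N) +
     (\<Sum>s\<in>{1..t}. if s \<le> N then card (distinct_parts_above s (N - s)) else 0)"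
proof (induction t)
  case (Suc t)
  then show ?case
    using card_distinct_parts_above_Suc[of t N] by simp
qed simp

lemma card_distinct_parts_above_0_by_smallest:
  "0 < N \<Longrightarrow> card (distinct_parts_above 0 N) = (\<Sum>s\<in>{1..N}. card (distinct_parts_above s (N - s)))"
  using card_distinct_parts_above_0_by_smallest_le[of N N] by (simp add: distinct_parts_above_self)

lemma sum_card_distinct_parts_above_pred:
  "(\<Sum>s\<in>{1..N}. card (distinct_parts_above (s - 1) (N - s))) =
     (\<Sum>s\<in>{1..N}. card (distinct_parts_above s (N - s))) +
     (\<Sum>s\<in>{1..N div 2}. card (distinct_parts_above s (N - 2 * s)))"
proof -
  have "card (distinct_parts_above (s - 1) (N - s)) = card (distinct_parts_above s (N - s)) +
      (if 2 * s \<le> N then card (distinct_parts_above s (N - 2 * s)) else 0)" if "1 \<le> s" for s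
    using that card_distinct_parts_above_Suc[of "s - 1" "N - s"] by (simp add: mult_2)
  then have "(\<Sum>s\<in>{1..N}. card (distinct_parts_above (s - 1) (N - s))) =
      (\<Sum>s\<in>{1..N}. card (distinct_parts_above s (N - s))) +
      (\<Sum>s\<in>{1..N}. if 2 * s \<le> N then card (distinct_parts_above s (N - 2 * s)) else 0)"
    by (simp add: sum.distrib)
  also have "(\<Sum>s\<in>{1..N}. if 2 * s \<le> N then card (distinct_parts_above s (N - 2 * s)) else 0) =
      (\<Sum>s\<in>{1..N div 2}. card (distinct_parts_above s (N - 2 * s)))"
  proof -
    have "{1..N} \<inter> {s. 2 * s \<le> N} = {1..N div 2}"
      by auto
    then show ?thesis
      unfolding sum.If_cases[OF finite_atLeastAtMost] by simp
  qed
  finally show ?thesis .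
qed

lemma D_set_eq:
  "{M. sum_mset M = N \<and> M \<noteq> {#} \<and> count M (Min_mset M) = 2 \<and>
      (\<forall>x. x \<noteq> Min_mset M \<longrightarrow> count M x \<le> 1)} =
    (\<Union>s\<in>{0..N div 2}. (\<lambda>X. add_mset s (add_mset s X)) ` distinct_parts_above s (N - 2 * s))"
proof (intro equalityI subsetI)
  fix M assume "M \<in> {M. sum_mset M = N \<and> M \<noteq> {#} \<and> count M (Min_mset M) = 2 \<and>
      (\<forall>x. x \<noteq> Min_mset M \<longrightarrow> count M x \<le> 1)}"
  then have M: "sum_mset M = N" "M \<noteq> {#}" "count M (Min_mset M) = 2"
    "\<forall>x. x \<noteq> Min_mset M \<longrightarrow> count M x \<le> 1"
    by auto
  define s where "s = Min_mset M"
  from M(2-4) obtain X where "M = add_mset s (add_mset s X)" "\<forall>x\<in>#X. s < x" "\<forall>x. count X x \<le> 1"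
    unfolding s_def by (rule doubled_Min_msetE)
  with M(1) have "s \<le> N div 2" "X \<in> distinct_parts_above s (N - 2 * s)"
    "M = add_mset s (add_mset s X)"
    by (auto simp: distinct_parts_above_def partitions_def)
  then show "M \<in> (\<Union>s\<in>{0..N div 2}. (\<lambda>X. add_mset s (add_mset s X)) ` distinct_parts_above s (N - 2 * s))"
    by auto
next
  fix M assume "M \<in> (\<Union>s\<in>{0..N div 2}. (\<lambda>X. add_mset s (add_mset s X)) ` distinct_parts_above s (N - 2 * s))"
  then obtain s X where "s \<le> N div 2" "X \<in> distinct_parts_above s (N - 2 * s)"
    "M = add_mset s (add_mset s X)"
    by auto
  moreover from this have "\<forall>x\<in>#X. s < x" "s \<notin># X"
    by (auto simp: distinct_parts_above_def)
  ultimately show "M \<in> {M. sum_mset M = N \<and> M \<noteq> {#} \<and> count M (Min_mset M) = 2 \<and>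
      (\<forall>x. x \<noteq> Min_mset M \<longrightarrow> count M x \<le> 1)}"
    using Min_mset_add_mset_twice[of X s]
    by (auto simp: distinct_parts_above_def partitions_def not_in_iff)
qed

lemma D_by_smallest_part: "D N = (\<Sum>s\<in>{0..N div 2}. card (distinct_parts_above s (N - 2 * s)))"
proof -
  have "inj_on (\<lambda>(s, X). add_mset s (add_mset s X))
      (SIGMA s:{0..N div 2}. distinct_parts_above s (N - 2 * s))"
  proof (rule inj_onI, clarsimp)
    fix i j X Y
    assume X: "X \<in> distinct_parts_above i (N - 2 * i)" and Y: "Y \<in> distinct_parts_above j (N - 2 * j)"
      and eq: "add_mset i (add_mset i X) = add_mset j (add_mset j Y)"
    have "Min_mset (add_mset i (add_mset i X)) = i" "Min_mset (add_mset j (add_mset j Y)) = j"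
      using Min_mset_add_mset_twice[of X i] Min_mset_add_mset_twice[of Y j] X Y
      unfolding distinct_parts_above_def by blast+
    with eq show "i = j \<and> X = Y"
      by simp
  qed
  then show ?thesis
    unfolding D_def D_set_eq by (simp add: card_UN_image_inj finite_distinct_parts_above)
qed

lemma D_Suc_eq:
  assumes "0 < m"
  shows "D (Suc m) = 2 * card (distinct_parts_above 0 m)"
proof -
  let ?d = "\<lambda>s N. card (distinct_parts_above s N)"
  have "D (Suc m) = ?d 0 (Suc m) + (\<Sum>s\<in>{1..Suc m div 2}. ?d s (Suc m - 2 * s))"
    unfolding D_by_smallest_part by (simp add: sum.atLeast_Suc_atMost)
  also have "\<dots> = (\<Sum>s\<in>{1..Suc m}. ?d (s - 1) (Suc m - s))"
    using card_distinct_parts_above_0_by_smallest[of "Suc m"] sum_card_distinct_parts_above_pred[of "Suc m"]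
    by linarith
  also have "\<dots> = (\<Sum>t\<in>{0..m}. ?d t (m - t))"
    using sum.atLeast_Suc_atMost_Suc_shift[of "\<lambda>s. ?d (s - 1) (Suc m - s)" 0 m] by simp
  also have "\<dots> = ?d 0 m + (\<Sum>t\<in>{1..m}. ?d t (m - t))"
    by (simp add: sum.atLeast_Suc_atMost)
  also have "\<dots> = 2 * ?d 0 m"
    using card_distinct_parts_above_0_by_smallest[OF assms] by simp
  finally show ?thesis .
qed

theorem theorem7:
  fixes n :: nat
  assumes "0 < n"
  shows "A n = B n \<and> B n = C (n + 1) \<and> 2 * C (n + 1) = D (n + 1) \<and>
         C (n + 1) = E (n + 2) \<and> E (n + 2) = F (n + 1)"
proof -
  have "A n = B n"
    using A_eq_card_half_distinct_partitions B_eq_card_odd_partitions_below[OF assms]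
      card_half_distinct_eq_odd_partitions_below[of n n] assms by simp
  moreover have "C (n + 1) = B n"
    unfolding C_by_largest_part B_by_largest_part[OF assms]
    by (rule sum.cong) (simp_all add: card_half_distinct_eq_odd_partitions_below)
  moreover have "D (n + 1) = 2 * A n"
    using D_Suc_eq assms by (simp add: A_eq_card_distinct_parts_above)
  ultimately show ?thesis
    using B_by_largest_part[OF assms] E_by_largest_part F_by_largest_part by simp
qed

end
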